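(* Every special generalized crown has, as a retract, a special generalized crown that has no irreducible elements.
   Context: All posets are finite. A subset $Q\subseteq P$ (with induced order) is a retract of $P$ if there is an order-preserving map $f:P\to Q$ with $f(q)=q$ for all $q\in Q$. For $p,q\in P$, $p$ is a lower cover of $q$ (and $q$ an upper cover of $p$) if $p<q$ and there is no $r$ with $p<r<q$. An element is irreducible if it has exactly one upper cover or exactly one lower cover. Let $A=(a_0,\dots,a_{m-1})$ and $B=(b_0,\dots,b_{n-1})$ be disjoint antichains in a poset, each equipped with a cyclic ordering given by the indexing, with $m,n\ge 2$. The subposet $A\cup B$ is circulant with bipartition $\{A,B\}$ if every strict comparability in $A\cup B$ is between an element of $A$ and an element of $B$, and the map sending $a_i\mapsto a_{i+1 \bmod m}$ and $b_j\mapsto b_{j+1\bmod n}$ is order-preserving on $A\cup B$. A poset $P$ is a generalized crown with $k$-partition $\{A_0,\dots,A_{k-1}\}$ if $P$ is partitioned into cyclically ordered antichains $A_0,\dots,A_{k-1}$, each with at least two elements, such that for all $0\le i<j\le k-1$ the subposet $A_i\cup A_j$ is circulant with bipartition $\{A_i,A_j\}$. Such a generalized crown is special if it admits an automorphism whose orbits are exactly the sets $A_0,\dots,A_{k-1}$. *)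

theory Defs
  imports Main
begin

text \<open>A finite poset is a finite carrier set P together with a relation le that is a
partial order on P. Subsets carry the induced order (the same relation restricted).\<close>

definition poset_on :: "'a set \<Rightarrow> ('a \<Rightarrow> 'a \<Rightarrow> bool) \<Rightarrow> bool" where
  "poset_on P le \<longleftrightarrow> finite P \<and> (\<forall>x\<in>P. le x x)
     \<and> (\<forall>x\<in>P. \<forall>y\<in>P. le x y \<and> le y x \<longrightarrow> x = y)
     \<and> (\<forall>x\<in>P. \<forall>y\<in>P. \<forall>z\<in>P. le x y \<and> le y z \<longrightarrow> le x z)"

definition strict :: "('a \<Rightarrow> 'a \<Rightarrow> bool) \<Rightarrow> 'a \<Rightarrow> 'a \<Rightarrow> bool" where
  "strict le x y \<longleftrightarrow> le x y \<and> x \<noteq> y"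

definition order_preserving_on :: "'a set \<Rightarrow> ('a \<Rightarrow> 'a \<Rightarrow> bool) \<Rightarrow> ('a \<Rightarrow> 'a) \<Rightarrow> bool" where
  "order_preserving_on S le f \<longleftrightarrow> (\<forall>x\<in>S. \<forall>y\<in>S. le x y \<longrightarrow> le (f x) (f y))"

definition is_retract :: "'a set \<Rightarrow> ('a \<Rightarrow> 'a \<Rightarrow> bool) \<Rightarrow> 'a set \<Rightarrow> bool" where
  "is_retract P le Q \<longleftrightarrow> Q \<subseteq> P \<and>
     (\<exists>f. f ` P \<subseteq> Q \<and> order_preserving_on P le f \<and> (\<forall>q\<in>Q. f q = q))"

definition upper_cover :: "'a set \<Rightarrow> ('a \<Rightarrow> 'a \<Rightarrow> bool) \<Rightarrow> 'a \<Rightarrow> 'a \<Rightarrow> bool" where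
  "upper_cover P le p q \<longleftrightarrow> p \<in> P \<and> q \<in> P \<and> strict le p q \<and>
     \<not> (\<exists>r\<in>P. strict le p r \<and> strict le r q)"

definition irreducible :: "'a set \<Rightarrow> ('a \<Rightarrow> 'a \<Rightarrow> bool) \<Rightarrow> 'a \<Rightarrow> bool" where
  "irreducible P le x \<longleftrightarrow> x \<in> P \<and>
     (card {q. upper_cover P le x q} = 1 \<or> card {p. upper_cover P le p x} = 1)"

definition antichain :: "('a \<Rightarrow> 'a \<Rightarrow> bool) \<Rightarrow> 'a set \<Rightarrow> bool" where
  "antichain le A \<longleftrightarrow> (\<forall>x\<in>A. \<forall>y\<in>A. le x y \<longrightarrow> x = y)"

text \<open>A cyclically ordered antichain (a_0,...,a_{m-1}) is given by m and an injective
enumeration a of {..<m}. The cyclic shift on the union of two of them:\<close>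

definition cshift :: "nat \<Rightarrow> (nat \<Rightarrow> 'a) \<Rightarrow> nat \<Rightarrow> (nat \<Rightarrow> 'a) \<Rightarrow> 'a \<Rightarrow> 'a" where
  "cshift m a n b x = (if x \<in> a ` {..<m}
      then a (Suc (inv_into {..<m} a x) mod m)
      else b (Suc (inv_into {..<n} b x) mod n))"

definition circulant :: "('a \<Rightarrow> 'a \<Rightarrow> bool) \<Rightarrow> nat \<Rightarrow> (nat \<Rightarrow> 'a) \<Rightarrow> nat \<Rightarrow> (nat \<Rightarrow> 'a) \<Rightarrow> bool" where
  "circulant le m a n b \<longleftrightarrow>
     2 \<le> m \<and> 2 \<le> n \<and> inj_on a {..<m} \<and> inj_on b {..<n}
     \<and> antichain le (a ` {..<m}) \<and> antichain le (b ` {..<n})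
     \<and> a ` {..<m} \<inter> b ` {..<n} = {}
     \<and> (\<forall>x\<in>a ` {..<m} \<union> b ` {..<n}. \<forall>y\<in>a ` {..<m} \<union> b ` {..<n}. strict le x y \<longrightarrow>
          (x \<in> a ` {..<m} \<and> y \<in> b ` {..<n}) \<or> (x \<in> b ` {..<n} \<and> y \<in> a ` {..<m}))
     \<and> order_preserving_on (a ` {..<m} \<union> b ` {..<n}) le (cshift m a n b)"

text \<open>Generalized crown with k-partition A_i = e i ` {..<m i}, i < k.\<close>

definition gen_crown :: "'a set \<Rightarrow> ('a \<Rightarrow> 'a \<Rightarrow> bool) \<Rightarrow> nat \<Rightarrow> (nat \<Rightarrow> nat) \<Rightarrow> (nat \<Rightarrow> nat \<Rightarrow> 'a) \<Rightarrow> bool" where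
  "gen_crown P le k m e \<longleftrightarrow>
     (\<forall>i<k. 2 \<le> m i \<and> inj_on (e i) {..<m i} \<and> antichain le (e i ` {..<m i}))
     \<and> (\<forall>i<k. \<forall>j<k. i \<noteq> j \<longrightarrow> e i ` {..<m i} \<inter> e j ` {..<m j} = {})
     \<and> P = (\<Union>i<k. e i ` {..<m i})
     \<and> (\<forall>i j. i < j \<and> j < k \<longrightarrow> circulant le (m i) (e i) (m j) (e j))"

definition automorphism :: "'a set \<Rightarrow> ('a \<Rightarrow> 'a \<Rightarrow> bool) \<Rightarrow> ('a \<Rightarrow> 'a) \<Rightarrow> bool" where
  "automorphism P le f \<longleftrightarrow> bij_betw f P P \<and> (\<forall>x\<in>P. \<forall>y\<in>P. le x y \<longleftrightarrow> le (f x) (f y))"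

definition orbit :: "('a \<Rightarrow> 'a) \<Rightarrow> 'a \<Rightarrow> 'a set" where
  "orbit f x = {(f ^^ n) x | n. True}"

definition special_gen_crown :: "'a set \<Rightarrow> ('a \<Rightarrow> 'a \<Rightarrow> bool) \<Rightarrow> bool" where
  "special_gen_crown P le \<longleftrightarrow> (\<exists>k m e. gen_crown P le k m e \<and>
     (\<exists>f. automorphism P le f \<and> {orbit f x | x. x \<in> P} = {e i ` {..<m i} | i. i < k}))"

end

theory Submission
  imports Defs
begin

(* If x is irreducible in a special generalized crown P, then so is every element of its orbit A
   under the automorphism, and A is one of the antichains of the partition. The unique upper (or
   lower) cover c of an irreducible element lies above everything strictly below it and below
   everything strictly above it; since A is an antichain, moving every element of A to its cover
   is a retraction of P onto P - A. The automorphism permutes the remaining antichains, so P - A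
   is again a special generalized crown, and induction on the size of P finishes the proof. *)

lemma poset_onD:
  assumes "poset_on P le"
  shows poset_on_finite: "finite P"
    and poset_on_refl: "x \<in> P \<Longrightarrow> le x x"
    and poset_on_antisym: "x \<in> P \<Longrightarrow> y \<in> P \<Longrightarrow> le x y \<Longrightarrow> le y x \<Longrightarrow> x = y"
    and poset_on_trans: "x \<in> P \<Longrightarrow> y \<in> P \<Longrightarrow> z \<in> P \<Longrightarrow> le x y \<Longrightarrow> le y z \<Longrightarrow> le x z"
  using assms unfolding poset_on_def by blast+

lemma poset_on_subset:
  assumes "poset_on P le" "Q \<subseteq> P"
  shows "poset_on Q le"
  unfolding poset_on_def
  using finite_subset[OF assms(2) poset_on_finite[OF assms(1)]] poset_onD(2-4)[OF assms(1)] assms(2)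
  by blast

lemma poset_on_conversep [simp]: "poset_on P le\<inverse>\<inverse> \<longleftrightarrow> poset_on P le"
  unfolding poset_on_def conversep_iff by blast

lemma strict_conversep [simp]: "strict le\<inverse>\<inverse> x y \<longleftrightarrow> strict le y x"
  unfolding strict_def by auto

lemma upper_cover_conversep [simp]: "upper_cover P le\<inverse>\<inverse> p q \<longleftrightarrow> upper_cover P le q p"
  unfolding upper_cover_def by auto

lemma automorphism_conversep [simp]: "automorphism P le\<inverse>\<inverse> g \<longleftrightarrow> automorphism P le g"
  unfolding automorphism_def by auto

lemma is_retract_refl: "is_retract P le P"
  unfolding is_retract_def order_preserving_on_def by (intro conjI exI[of _ id]) auto

lemma is_retract_trans:
  assumes "is_retract P le Q" "is_retract Q le R"
  shows "is_retract P le R"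
proof -
  obtain f where f: "Q \<subseteq> P" "f ` P \<subseteq> Q" "order_preserving_on P le f" "\<forall>q\<in>Q. f q = q"
    using assms(1) unfolding is_retract_def by blast
  obtain g where g: "R \<subseteq> Q" "g ` Q \<subseteq> R" "order_preserving_on Q le g" "\<forall>q\<in>R. g q = q"
    using assms(2) unfolding is_retract_def by blast
  have "order_preserving_on P le (g \<circ> f)"
    using f(2,3) g(3) unfolding order_preserving_on_def by (simp add: image_subset_iff)
  then show ?thesis
    unfolding is_retract_def using f g by (intro conjI exI[of _ "g \<circ> f"]) (auto simp: image_subset_iff)
qed

lemma poset_on_has_minimal:
  assumes po: "poset_on P le" and S: "S \<subseteq> P" "y \<in> S"
  obtains w where "w \<in> S" "\<forall>u\<in>S. le u w \<longrightarrow> u = w"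
proof -
  define down where "down w = {v\<in>P. le v w}" for w
  obtain w where w: "w \<in> S" and least: "\<And>u. u \<in> S \<Longrightarrow> card (down w) \<le> card (down u)"
    using ex_has_least_nat[of "\<lambda>w. w \<in> S" y "\<lambda>w. card (down w)"] S(2) by blast
  have "u = w" if u: "u \<in> S" "le u w" for u
  proof (rule ccontr)
    assume "u \<noteq> w"
    have "down u \<subseteq> down w"
      using poset_on_trans[OF po] u w S unfolding down_def by blast
    moreover have "w \<in> down w - down u"
      using poset_on_refl[OF po] poset_on_antisym[OF po] \<open>u \<noteq> w\<close> u w S unfolding down_def by blast
    ultimately have "card (down u) < card (down w)"
      using poset_on_finite[OF po] unfolding down_def by (intro psubset_card_mono) auto
    then show False using least[OF u(1)] by simp
  qed
  then show thesis using w that by blast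
qed

lemma upper_cover_below:
  assumes po: "poset_on P le" and x: "x \<in> P" and z: "z \<in> P" "strict le x z"
  obtains w where "upper_cover P le x w" "le w z"
proof -
  let ?S = "{w\<in>P. strict le x w \<and> le w z}"
  obtain w where w: "w \<in> ?S" and min: "\<forall>u\<in>?S. le u w \<longrightarrow> u = w"
    using poset_on_has_minimal[OF po, of ?S z] poset_on_refl[OF po] z by blast
  have "upper_cover P le x w"
    using w min poset_on_trans[OF po] z x unfolding upper_cover_def strict_def by blast
  then show thesis using that w by blast
qed

(* Then x can be retracted onto c: sending x to c and fixing the rest of P is order-preserving. *)
definition folds_onto :: "'a set \<Rightarrow> ('a \<Rightarrow> 'a \<Rightarrow> bool) \<Rightarrow> 'a \<Rightarrow> 'a \<Rightarrow> bool" where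
  "folds_onto P le x c \<longleftrightarrow>
     c \<in> P \<and> (\<forall>z\<in>P. strict le x z \<longrightarrow> le c z) \<and> (\<forall>z\<in>P. strict le z x \<longrightarrow> le z c)"

lemma folds_onto_conversep [simp]: "folds_onto P le\<inverse>\<inverse> x c \<longleftrightarrow> folds_onto P le x c"
  unfolding folds_onto_def by auto

lemma unique_upper_cover_folds_onto:
  assumes po: "poset_on P le" and x: "x \<in> P" and c: "{q. upper_cover P le x q} = {c}"
  shows "folds_onto P le x c"
proof -
  have cover_iff: "upper_cover P le x q \<longleftrightarrow> q = c" for q
    using c by (simp add: set_eq_iff)
  have "upper_cover P le x c" using cover_iff by simp
  then have cP: "c \<in> P" and xc: "le x c" unfolding upper_cover_def strict_def by blast+
  have "le c z" if z: "z \<in> P" "strict le x z" for z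
  proof -
    obtain w where "upper_cover P le x w" "le w z"
      using upper_cover_below[OF po x z] .
    then show ?thesis using cover_iff by auto
  qed
  moreover have "le z c" if "z \<in> P" "strict le z x" for z
    using poset_on_trans[OF po that(1) x cP] that(2) xc unfolding strict_def by blast
  ultimately show ?thesis using cP unfolding folds_onto_def by blast
qed

lemma irreducible_folds_onto:
  assumes po: "poset_on P le" and irr: "irreducible P le x"
  obtains c where "folds_onto P le x c" "strict le x c \<or> strict le c x"
proof -
  have x: "x \<in> P" using irr unfolding irreducible_def by blast
  have unique_cover: "\<exists>c. folds_onto P le' x c \<and> upper_cover P le' x c"
    if po': "poset_on P le'" and card: "card {q. upper_cover P le' x q} = 1" for le'
  proof -
    obtain c where c: "{q. upper_cover P le' x q} = {c}"
      using card_1_singletonE[OF card] .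
    then have "upper_cover P le' x c" by (metis insertI1 mem_Collect_eq)
    then show ?thesis using unique_upper_cover_folds_onto[OF po' x c] by blast
  qed
  consider (up) "card {q. upper_cover P le x q} = 1" | (down) "card {q. upper_cover P le\<inverse>\<inverse> x q} = 1"
    using irr unfolding irreducible_def by auto
  then show thesis
  proof cases
    case up
    then obtain c where "folds_onto P le x c" "upper_cover P le x c"
      using unique_cover[OF po] by blast
    then show thesis using that unfolding upper_cover_def by blast
  next
    case down
    then obtain c where "folds_onto P le x c" "upper_cover P le c x"
      using unique_cover[of "le\<inverse>\<inverse>"] po by auto
    then show thesis using that unfolding upper_cover_def by blast
  qed
qed

lemma is_retract_Diff_antichain:
  assumes po: "poset_on P le" and A: "antichain le A"
    and fold: "\<forall>x\<in>A. \<exists>c. c \<notin> A \<and> folds_onto P le x c"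
  shows "is_retract P le (P - A)"
proof -
  obtain h where h: "\<forall>x\<in>A. h x \<notin> A \<and> folds_onto P le x (h x)" using fold by metis
  define f where "f x = (if x \<in> A then h x else x)" for x
  have "order_preserving_on P le f"
    unfolding order_preserving_on_def
  proof (intro ballI impI)
    fix x y assume xy: "x \<in> P" "y \<in> P" "le x y"
    have fold_up: "le (h x) y" if "x \<in> A" "y \<notin> A"
      using h that xy unfolding folds_onto_def strict_def by blast
    have fold_down: "le x (h y)" if "x \<notin> A" "y \<in> A"
      using h that xy unfolding folds_onto_def strict_def by blast
    have "x = y" if "x \<in> A" "y \<in> A"
      using A that xy(3) unfolding antichain_def by blast
    moreover have "h x \<in> P" if "x \<in> A"
      using h that unfolding folds_onto_def by blast
    ultimately show "le (f x) (f y)"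
      using fold_up fold_down xy(3) poset_on_refl[OF po] unfolding f_def by auto
  qed
  moreover have "f ` P \<subseteq> P - A" using h unfolding f_def folds_onto_def by auto
  ultimately show ?thesis unfolding is_retract_def by (intro conjI exI[of _ f]) (auto simp: f_def)
qed

lemma automorphism_strict_iff:
  assumes "automorphism P le g" "x \<in> P" "y \<in> P"
  shows "strict le (g x) (g y) \<longleftrightarrow> strict le x y"
  using assms unfolding automorphism_def bij_betw_def strict_def by (metis inj_on_eq_iff)

lemma automorphism_upper_cover_iff:
  assumes g: "automorphism P le g" and p: "p \<in> P" and q: "q \<in> P"
  shows "upper_cover P le (g p) (g q) \<longleftrightarrow> upper_cover P le p q"
proof -
  have onto: "g ` P = P" using g unfolding automorphism_def bij_betw_def by blast
  have "(\<exists>r\<in>P. strict le (g p) r \<and> strict le r (g q))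
      \<longleftrightarrow> (\<exists>r\<in>P. strict le (g p) (g r) \<and> strict le (g r) (g q))"
    by (metis (no_types, lifting) imageE imageI onto)
  also have "\<dots> \<longleftrightarrow> (\<exists>r\<in>P. strict le p r \<and> strict le r q)"
    using automorphism_strict_iff[OF g] p q by blast
  finally show ?thesis
    unfolding upper_cover_def using automorphism_strict_iff[OF g p q] p q onto by blast
qed

lemma automorphism_upper_covers:
  assumes g: "automorphism P le g" and x: "x \<in> P"
  shows "{q. upper_cover P le (g x) q} = g ` {q. upper_cover P le x q}"
proof -
  have onto: "g ` P = P" using g unfolding automorphism_def bij_betw_def by blast
  have in_P: "upper_cover P le y q \<Longrightarrow> q \<in> P" for y q by (simp add: upper_cover_def)
  have "{q. upper_cover P le (g x) q} = {q \<in> g ` P. upper_cover P le (g x) q}"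
    using onto in_P by blast
  also have "\<dots> = g ` {q \<in> P. upper_cover P le (g x) (g q)}"
    by blast
  also have "\<dots> = g ` {q. upper_cover P le x q}"
    using automorphism_upper_cover_iff[OF g x] in_P by auto
  finally show ?thesis .
qed

lemma irreducible_automorphism_image:
  assumes g: "automorphism P le g" and irr: "irreducible P le x"
  shows "irreducible P le (g x)"
proof -
  have x: "x \<in> P" using irr unfolding irreducible_def by blast
  have inj: "inj_on g P" and gx: "g x \<in> P"
    using g x unfolding automorphism_def bij_betw_def by auto
  have "card {q. upper_cover P le' (g x) q} = card {q. upper_cover P le' x q}"
    if "automorphism P le' g" for le'
  proof -
    have "{q. upper_cover P le' x q} \<subseteq> P" by (auto simp: upper_cover_def)
    then show ?thesis
      using automorphism_upper_covers[OF that x] card_image inj_on_subset[OF inj] by metis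
  qed
  from this[of le] this[of "le\<inverse>\<inverse>"] show ?thesis
    using g irr gx unfolding irreducible_def by simp
qed

lemma orbit_self: "x \<in> orbit f x"
  unfolding orbit_def by (metis (mono_tags) funpow_0 mem_Collect_eq)

lemma orbit_step: "f x \<in> orbit f x"
  unfolding orbit_def by (metis (mono_tags) funpow_0 funpow_Suc_right comp_apply mem_Collect_eq)

lemma irreducible_orbit:
  assumes g: "automorphism P le g" and irr: "irreducible P le x" and y: "y \<in> orbit g x"
  shows "irreducible P le y"
proof -
  obtain n where "y = (g ^^ n) x" using y unfolding orbit_def by blast
  moreover have "irreducible P le ((g ^^ n) x)"
    by (induction n) (simp_all add: irr irreducible_automorphism_image[OF g])
  ultimately show ?thesis by simp
qed

definition skip_index :: "nat \<Rightarrow> nat \<Rightarrow> nat" where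
  "skip_index i j = (if j < i then j else Suc j)"

lemma strict_mono_skip_index: "strict_mono (skip_index i)"
  unfolding strict_mono_def skip_index_def by auto

lemma skip_index_image:
  assumes "i < k"
  shows "skip_index i ` {..<k - 1} = {..<k} - {i}"
proof
  show "skip_index i ` {..<k - 1} \<subseteq> {..<k} - {i}"
    using assms by (auto simp: skip_index_def)
  show "{..<k} - {i} \<subseteq> skip_index i ` {..<k - 1}"
  proof
    fix l assume l: "l \<in> {..<k} - {i}"
    show "l \<in> skip_index i ` {..<k - 1}"
    proof (cases "l < i")
      case True
      then show ?thesis using assms by (intro image_eqI[of _ _ l]) (auto simp: skip_index_def)
    next
      case False
      then show ?thesis using l by (intro image_eqI[of _ _ "l - 1"]) (auto simp: skip_index_def)
    qed
  qed
qed

lemma gen_crown_subfamily: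
  assumes gc: "gen_crown P le k m e" and s: "strict_mono s" "s ` {..<k'} \<subseteq> {..<k}"
  shows "gen_crown (\<Union>j<k'. e (s j) ` {..<m (s j)}) le k' (m \<circ> s) (e \<circ> s)"
proof -
  have blocks: "\<forall>i<k. 2 \<le> m i \<and> inj_on (e i) {..<m i} \<and> antichain le (e i ` {..<m i})"
    and disjoint: "\<forall>i<k. \<forall>j<k. i \<noteq> j \<longrightarrow> e i ` {..<m i} \<inter> e j ` {..<m j} = {}"
    and circulant: "\<forall>i j. i < j \<and> j < k \<longrightarrow> circulant le (m i) (e i) (m j) (e j)"
    using gc unfolding gen_crown_def by simp_all
  have bound: "s j < k" if "j < k'" for j using s(2) that by blast
  have inj: "s j \<noteq> s j'" if "j \<noteq> j'" for j j' using strict_mono_eq[OF s(1)] that by simp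
  have mono: "s j < s j'" if "j < j'" for j j' using strict_monoD[OF s(1) that] .
  show ?thesis
    unfolding gen_crown_def comp_apply
  proof (intro conjI)
    show "\<forall>j<k'. 2 \<le> m (s j) \<and> inj_on (e (s j)) {..<m (s j)} \<and> antichain le (e (s j) ` {..<m (s j)})"
      using blocks bound by simp
    show "\<forall>i<k'. \<forall>j<k'. i \<noteq> j \<longrightarrow> e (s i) ` {..<m (s i)} \<inter> e (s j) ` {..<m (s j)} = {}"
      using disjoint bound inj by simp
    show "\<forall>i j. i < j \<and> j < k' \<longrightarrow> circulant le (m (s i)) (e (s i)) (m (s j)) (e (s j))"
      using circulant bound mono by simp
  qed simp
qed

lemma gen_crown_Diff_block_eq:
  assumes gc: "gen_crown P le k m e" and i: "i < k"
  shows "P - e i ` {..<m i} = (\<Union>j<k - 1. e (skip_index i j) ` {..<m (skip_index i j)})"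
proof -
  have "P - e i ` {..<m i} = (\<Union>l\<in>{..<k} - {i}. e l ` {..<m l})"
    using gc i unfolding gen_crown_def by blast
  also have "\<dots> = (\<Union>j<k - 1. e (skip_index i j) ` {..<m (skip_index i j)})"
    by (simp only: image_image flip: skip_index_image[OF i])
  finally show ?thesis .
qed

lemma orbit_eq_block:
  assumes gc: "gen_crown P le k m e" and orb: "{orbit g x | x. x \<in> P} = {e i ` {..<m i} | i. i < k}"
    and j: "j < k" "x \<in> e j ` {..<m j}"
  shows "orbit g x = e j ` {..<m j}"
proof -
  have "x \<in> P" using gc j unfolding gen_crown_def by blast
  then obtain i where i: "i < k" "orbit g x = e i ` {..<m i}" using orb by blast
  then have "i = j" using orbit_self[of x g] gc j unfolding gen_crown_def by blast
  then show ?thesis using i by simp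
qed

lemma special_gen_crownI:
  assumes gc: "gen_crown Q le k m e" and g: "automorphism P le g" and QP: "Q \<subseteq> P"
    and orbits: "\<And>j x. j < k \<Longrightarrow> x \<in> e j ` {..<m j} \<Longrightarrow> orbit g x = e j ` {..<m j}"
  shows "special_gen_crown Q le"
proof -
  have Q: "Q = (\<Union>j<k. e j ` {..<m j})" using gc unfolding gen_crown_def by (elim conjE)
  have "inj_on g P" using g unfolding automorphism_def bij_betw_def by blast
  then have inj: "inj_on g Q" using QP by (rule inj_on_subset)
  have "g ` e j ` {..<m j} = e j ` {..<m j}" if j: "j < k" for j
  proof (rule endo_inj_surj)
    show "g ` e j ` {..<m j} \<subseteq> e j ` {..<m j}"
    proof (rule image_subsetI)
      fix x assume "x \<in> e j ` {..<m j}"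
      then show "g x \<in> e j ` {..<m j}" using orbit_step[of g x] orbits[OF j] by simp
    qed
    have "e j ` {..<m j} \<subseteq> Q" using Q j by blast
    then show "inj_on g (e j ` {..<m j})" using inj_on_subset[OF inj] by blast
  qed simp
  then have "g ` Q = Q" unfolding Q image_UN by simp
  then have "automorphism Q le g"
    using inj g QP unfolding automorphism_def bij_betw_def by blast
  moreover have "{orbit g x | x. x \<in> Q} = {e j ` {..<m j} | j. j < k}"
  proof (intro equalityI subsetI)
    fix B assume "B \<in> {orbit g x | x. x \<in> Q}"
    then obtain x j where "B = orbit g x" "j < k" "x \<in> e j ` {..<m j}" unfolding Q by blast
    then show "B \<in> {e j ` {..<m j} | j. j < k}" using orbits by blast
  next
    fix B assume "B \<in> {e j ` {..<m j} | j. j < k}"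
    then obtain j where j: "j < k" "B = e j ` {..<m j}" by blast
    then have "e j 0 \<in> B" using gc unfolding gen_crown_def by auto
    moreover have "B \<subseteq> Q" using Q j by blast
    ultimately show "B \<in> {orbit g x | x. x \<in> Q}" using orbits[of j "e j 0"] j by blast
  qed
  ultimately show ?thesis using gc unfolding special_gen_crown_def by blast
qed

lemma special_gen_crown_Diff_block:
  assumes gc: "gen_crown P le k m e" and g: "automorphism P le g"
    and orb: "{orbit g x | x. x \<in> P} = {e j ` {..<m j} | j. j < k}" and i: "i < k"
  shows "special_gen_crown (P - e i ` {..<m i}) le"
proof -
  let ?s = "skip_index i"
  have s: "strict_mono ?s" "?s ` {..<k - 1} \<subseteq> {..<k}"
    using strict_mono_skip_index skip_index_image[OF i] by auto
  have "gen_crown (P - e i ` {..<m i}) le (k - 1) (m \<circ> ?s) (e \<circ> ?s)"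
    using gen_crown_subfamily[OF gc s] gen_crown_Diff_block_eq[OF gc i] by simp
  moreover have "orbit g x = (e \<circ> ?s) j ` {..<(m \<circ> ?s) j}"
    if "j < k - 1" "x \<in> (e \<circ> ?s) j ` {..<(m \<circ> ?s) j}" for j x
    using orbit_eq_block[OF gc orb] s(2) that by auto
  ultimately show ?thesis using special_gen_crownI[OF _ g Diff_subset] by blast
qed

lemma special_gen_crown_irreducible_proper_retract:
  assumes po: "poset_on P le" and sp: "special_gen_crown P le" and irr: "irreducible P le x"
  obtains Q where "Q \<subset> P" "is_retract P le Q" "special_gen_crown Q le"
proof -
  obtain k m e g where gc: "gen_crown P le k m e" and g: "automorphism P le g"
    and orb: "{orbit g x | x. x \<in> P} = {e j ` {..<m j} | j. j < k}"
    using sp unfolding special_gen_crown_def by (elim exE conjE) (rule that)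
  have x: "x \<in> P" using irr unfolding irreducible_def by blast
  then obtain i where i: "i < k" and A: "orbit g x = e i ` {..<m i}" using orb by blast
  have antichain: "antichain le (orbit g x)" using gc i A unfolding gen_crown_def by auto
  have "\<exists>c. c \<notin> orbit g x \<and> folds_onto P le y c" if y: "y \<in> orbit g x" for y
  proof -
    obtain c where "folds_onto P le y c" "strict le y c \<or> strict le c y"
      using irreducible_folds_onto[OF po irreducible_orbit[OF g irr y]] .
    then show ?thesis using antichain y unfolding antichain_def strict_def by blast
  qed
  then have "is_retract P le (P - orbit g x)"
    using is_retract_Diff_antichain[OF po antichain] by blast
  moreover have "special_gen_crown (P - orbit g x) le"
    using special_gen_crown_Diff_block[OF gc g orb i] A by simp
  moreover have "P - orbit g x \<subset> P" using x orbit_self[of x g] by blast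
  ultimately show thesis using that by blast
qed

theorem lemma3p4:
  fixes P :: "'a set" and le :: "'a \<Rightarrow> 'a \<Rightarrow> bool"
  assumes "poset_on P le"
    and "special_gen_crown P le"
  shows "\<exists>Q. is_retract P le Q \<and> special_gen_crown Q le \<and> (\<forall>x\<in>Q. \<not> irreducible Q le x)"
  using assms
proof (induction "card P" arbitrary: P rule: less_induct)
  case less
  show ?case
  proof (cases "\<exists>x\<in>P. irreducible P le x")
    case False
    then show ?thesis using is_retract_refl less.prems(2) by blast
  next
    case True
    then obtain x where "irreducible P le x" by blast
    then obtain Q where Q: "Q \<subset> P" "is_retract P le Q" "special_gen_crown Q le"
      by (rule special_gen_crown_irreducible_proper_retract[OF less.prems])
    have "card Q < card P" using psubset_card_mono[OF poset_on_finite[OF less.prems(1)] Q(1)] .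
    moreover have "poset_on Q le" using poset_on_subset less.prems(1) Q(1) by blast
    ultimately obtain R where "is_retract Q le R" "special_gen_crown R le" "\<forall>y\<in>R. \<not> irreducible R le y"
      using less.hyps Q(3) by blast
    then show ?thesis using is_retract_trans Q(2) by blast
  qed
qed
end
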